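(* For all integers $p\ge0$ and $r\ge1$, $$T(\{1\}_{p-1},\bar 1,\{1\}_{r-1},\bar 1)=\bar T(\{1\}_{r-1},p+1),$$ where by convention $(\{1\}_{-1},\bar 1)$ is the empty string (so for $p=0$ the left side is $T(\{1\}_{r-1},\bar 1)$).
   Context: $\{1\}_a$ denotes the sequence of $a$ ones. For positive integers $k_1,\dots,k_r$, some entries possibly marked with a bar, $T(\ldots):=2^r\sum_{0<n_1<\cdots<n_r}\frac{\prod_{j\text{ barred}}(-1)^{n_j}}{(2n_1-1)^{k_1}(2n_2-2)^{k_2}\cdots(2n_r-r)^{k_r}}$. $\bar T(k_1,\dots,k_r):=T(k_1,\dots,k_{r-1},\overline{k_r})$ (only the last entry barred). *)

theory Defs
  imports Complex_Main
begin

text \<open>An index entry is a pair (k, barred).\<close>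

fun Tpart :: "(nat \<times> bool) list \<Rightarrow> nat \<Rightarrow> nat \<Rightarrow> nat \<Rightarrow> real" where
  "Tpart [] j m N = 1"
| "Tpart ((k, b) # ks) j m N =
     (\<Sum>n\<in>{m<..N}. (if b then (-1) ^ n else 1) / (2 * real n - real j) ^ k
                     * Tpart ks (Suc j) n N)"

definition Tsum :: "(nat \<times> bool) list \<Rightarrow> nat \<Rightarrow> real" where
  "Tsum ks N = 2 ^ length ks * Tpart ks 1 0 N"

definition Tval :: "(nat \<times> bool) list \<Rightarrow> real" where
  "Tval ks = lim (Tsum ks)"

end

theory Submission
  imports Defs "HOL-Analysis.Analysis" "HOL-Real_Asymp.Real_Asymp"
begin

text \<open>
  Substituting \<open>m = 2 n - j\<close> for the \<open>j\<close>-th summation index turns consecutive indices into odd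
  increments, and the nested sums into iterates of the averaging operators
  \<open>avg w c a = (\<Sum>a'<a. c a' * w (a - a')) / a\<close> applied to the point mass at 0: an unbarred 1 gives
  the weight \<open>odd_ind\<close>, a barred 1 the weight \<open>odd_sign\<close> (the sign \<open>(-1)^n\<close> is absorbed by the
  parity of \<open>m\<close>).

  Both sides are compared through the pairing \<open>\<Sum>a b. c a * e b * K a b\<close> with
  \<open>K a b = a * \<integral>\<^sub>0\<^sup>1 x^(a-1) * u(x)^b dx\<close>, \<open>u(x) = (1 - x) / (1 + x)\<close>. The signed average is
  self-adjoint for this pairing and the unsigned one is adjoint to \<open>e b \<mapsto> e b / (2 b)\<close>: in both
  cases the inner sums telescope by elementary recurrences for the moments of \<open>u\<close>. Moving the \<open>p\<close>
  unsigned averages of the left-hand side across the pairing produces the factor \<open>(2 b)^-p\<close>, that is,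
  the depth \<open>p + 1\<close> of the last entry on the right. The decay \<open>(a + 1) powr (-3/4)\<close>, which the
  averages preserve, makes all double series absolutely summable.
\<close>

section \<open>Moments of the Cayley transform\<close>

definition cayley :: "real \<Rightarrow> real" where
  "cayley x = (1 - x) / (1 + x)"

lemma cayley_0 [simp]: "cayley 0 = 1" and cayley_1 [simp]: "cayley 1 = 0"
  by (auto simp: cayley_def)

lemma cayley_has_real_derivative:
  "0 \<le> x \<Longrightarrow> (cayley has_real_derivative - 2 / (1 + x)^2) (at x within S)"
  unfolding cayley_def
  by (rule derivative_eq_intros refl | simp)+ (simp add: field_simps power2_eq_square)

lemma continuous_on_cayley: "continuous_on {0..1} cayley"
  unfolding cayley_def by (intro continuous_intros) auto

lemma cayley_bounds:
  assumes "x \<in> {0..1}"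
  shows "0 \<le> cayley x" and "cayley x \<le> 1" and "cayley x \<le> 1 - x"
proof -
  have x: "0 \<le> x" "x \<le> 1" using assms by auto
  then have "1 - x \<le> (1 - x) * (1 + x)" using mult_left_le[of x x] by (simp add: algebra_simps)
  then show "cayley x \<le> 1 - x" using x by (simp add: cayley_def pos_divide_le_eq)
qed (use assms in \<open>auto simp: cayley_def\<close>)

definition moment :: "nat \<Rightarrow> nat \<Rightarrow> (real \<Rightarrow> real) \<Rightarrow> real" where
  "moment a b g = integral {0..1} (\<lambda>x. x^a * cayley x^b * g x)"

abbreviation momP :: "nat \<Rightarrow> nat \<Rightarrow> real" where "momP a b \<equiv> moment a b (\<lambda>_. 1)"
abbreviation momQ :: "nat \<Rightarrow> nat \<Rightarrow> real" where "momQ a b \<equiv> moment a b (\<lambda>x. 2 / (1 + x)^2)"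
abbreviation momK :: "nat \<Rightarrow> nat \<Rightarrow> real" where "momK a b \<equiv> moment a b (\<lambda>x. 1 / (1 + x^2))"

lemma integrable_moment:
  "continuous_on {0..1} g \<Longrightarrow> (\<lambda>x. x^a * cayley x^b * g x) integrable_on {0..1}"
  by (intro integrable_continuous_real continuous_intros continuous_on_cayley) auto

lemma continuous_on_moment_weights:
  "continuous_on {0..1} (\<lambda>x::real. 2 / (1 + x)^2)"
  "continuous_on {0..1} (\<lambda>x::real. 1 / (1 + x^2))"
  by (intro continuous_intros; auto simp: add_nonneg_eq_0_iff)+

lemma moment_mono:
  assumes "continuous_on {0..1} g" "continuous_on {0..1} h" "\<And>x. x \<in> {0..1} \<Longrightarrow> g x \<le> h x"
  shows "moment a b g \<le> moment a b h"
  unfolding moment_def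
proof (rule integral_le[OF integrable_moment[OF assms(1)] integrable_moment[OF assms(2)]])
  fix x :: real assume "x \<in> {0..1}"
  then show "x^a * cayley x^b * g x \<le> x^a * cayley x^b * h x"
    using assms(3) cayley_bounds(1) by (intro mult_left_mono) auto
qed

lemma moment_nonneg:
  assumes "continuous_on {0..1} g" "\<And>x. x \<in> {0..1} \<Longrightarrow> 0 \<le> g x"
  shows "0 \<le> moment a b g"
  using moment_mono[of "\<lambda>_. 0" g a b] assms by (simp add: moment_def)

lemma momK_nonneg: "0 \<le> momK a b"
  by (rule moment_nonneg[OF continuous_on_moment_weights(2)]) (simp add: add_pos_nonneg)

lemma momK_le_momP: "momK a b \<le> momP a b"
  by (rule moment_mono[OF continuous_on_moment_weights(2)]) (auto simp: add_pos_nonneg)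

lemma momP_0_right: "momP a 0 = 1 / (real a + 1)"
proof -
  have "((\<lambda>x::real. x^a) has_integral (1^Suc a / (real a + 1) - 0^Suc a / (real a + 1))) {0..1}"
  proof (rule fundamental_theorem_of_calculus)
    fix x :: real assume "x \<in> {0..1}"
    show "((\<lambda>x. x^(Suc a) / (real a + 1)) has_vector_derivative x^a) (at x within {0..1})"
      unfolding has_real_derivative_iff_has_vector_derivative[symmetric]
      by (rule derivative_eq_intros refl | simp)+ (simp add: field_simps)
  qed simp
  then show ?thesis by (simp add: moment_def integral_unique)
qed

lemma momK_0_right_le: "momK a 0 \<le> 1 / (real a + 1)"
  using momK_le_momP[of a 0] by (simp add: momP_0_right)

section \<open>The pairing kernel\<close>

text \<open>For \<open>a \<ge> 1\<close> this is \<open>\<integral>\<^sub>0\<^sup>1 cayley x ^ b d(x ^ a)\<close>; the value 1 at \<open>a = 0\<close> makes the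
  pairing with the point mass at 0 plain summation.\<close>
definition cayley_kernel :: "nat \<Rightarrow> nat \<Rightarrow> real" where
  "cayley_kernel a b = (if a = 0 then 1 else real a * momP (a - 1) b)"

lemma cayley_kernel_Suc_right: "cayley_kernel a (Suc b) = real (Suc b) * momQ a b"
proof -
  define F where "F x = x^a * cayley x ^ Suc b" for x :: real
  define f where "f x = real a * x^(a - 1) * cayley x ^ Suc b - real (Suc b) * (x^a * cayley x^b * (2 / (1 + x)^2))"
    for x :: real
  have "(f has_integral (F 1 - F 0)) {0..1}"
  proof (rule fundamental_theorem_of_calculus)
    fix x :: real assume x: "x \<in> {0..1}"
    have "(F has_real_derivative real a * x^(a - Suc 0) * cayley x ^ Suc b
        + real (Suc b) * (- 2 / (1 + x)^2 * cayley x ^ (Suc b - Suc 0)) * x^a) (at x within {0..1})"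
      unfolding F_def using x
      by (intro DERIV_mult[OF DERIV_pow DERIV_power[OF cayley_has_real_derivative]]) auto
    then show "(F has_vector_derivative f x) (at x within {0..1})"
      unfolding has_real_derivative_iff_has_vector_derivative[symmetric]
      by (rule DERIV_cong) (simp add: f_def algebra_simps)
  qed simp
  moreover have "F 1 - F 0 = - (if a = 0 then 1 else 0)" by (simp add: F_def)
  moreover have "integral {0..1} f = real a * momP (a - 1) (Suc b) - real (Suc b) * momQ a b"
  proof -
    note ints = integrable_on_cmult_left[OF integrable_moment[OF continuous_on_const], of "real a" "a - 1" "Suc b" 1]
                integrable_on_cmult_left[OF integrable_moment[OF continuous_on_moment_weights(1)], of "real (Suc b)" a b]
    have "integral {0..1} f = integral {0..1} (\<lambda>x. real a * (x^(a - 1) * cayley x ^ Suc b * 1))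
        - integral {0..1} (\<lambda>x. real (Suc b) * (x^a * cayley x^b * (2 / (1 + x)^2)))"
      using integral_diff[OF ints] by (simp add: f_def[abs_def] mult.assoc)
    then show ?thesis by (simp only: integral_mult_right moment_def)
  qed
  ultimately show ?thesis by (auto simp: cayley_kernel_def integral_unique)
qed

lemma moment_add_eq:
  assumes "continuous_on {0..1} g" "continuous_on {0..1} h"
    and "\<And>x. x \<in> {0..1} \<Longrightarrow> x^a * cayley x^b * g x + x^a' * cayley x^b' * h x = x^a'' * cayley x^b'' * k x"
  shows "moment a b g + moment a' b' h = moment a'' b'' k"
  unfolding moment_def
  by (subst integral_add[OF integrable_moment[OF assms(1)] integrable_moment[OF assms(2)], symmetric])
     (rule integral_cong, rule assms(3))

lemma momP_split: "momP a b = momK a b + momK (a + 2) b"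
proof (rule moment_add_eq[OF continuous_on_moment_weights(2,2), symmetric])
  fix x :: real
  have "1 + x^2 \<noteq> 0" by (simp add: add_nonneg_eq_0_iff)
  have "x^a * cayley x^b * K + x^(a + 2) * cayley x^b * K = x^a * cayley x^b * ((1 + x^2) * K)" for K
    by (simp add: power_add power2_eq_square algebra_simps)
  then have "x^a * cayley x^b * (1 / (1 + x^2)) + x^(a + 2) * cayley x^b * (1 / (1 + x^2))
      = x^a * cayley x^b * ((1 + x^2) * (1 / (1 + x^2)))" .
  also have "\<dots> = x^a * cayley x^b * 1" using \<open>1 + x^2 \<noteq> 0\<close> by simp
  finally show "x^a * cayley x^b * (1 / (1 + x^2)) + x^(a + 2) * cayley x^b * (1 / (1 + x^2))
      = x^a * cayley x^b * 1" .
qed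

lemma momQ_split: "momQ a b = momK a b + momK a (b + 2)"
proof (rule moment_add_eq[OF continuous_on_moment_weights(2,2), symmetric])
  fix x :: real assume "x \<in> {0..1}"
  then have "1 + x \<noteq> 0" "1 + x^2 \<noteq> 0" by (auto simp: add_nonneg_eq_0_iff)
  have "1 + cayley x^2 = 2 * (1 + x^2) / (1 + x)^2"
    using \<open>1 + x \<noteq> 0\<close> by (simp add: cayley_def divide_simps) (simp add: power2_eq_square algebra_simps)
  then have weight: "(1 + cayley x^2) * (1 / (1 + x^2)) = 2 / (1 + x)^2"
    using \<open>1 + x^2 \<noteq> 0\<close> by (simp add: divide_simps)
  have "x^a * cayley x^b * K + x^a * cayley x^(b + 2) * K = x^a * cayley x^b * ((1 + cayley x^2) * K)" for K
    by (simp add: power_add power2_eq_square algebra_simps)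
  from this[of "1 / (1 + x^2)"] show "x^a * cayley x^b * (1 / (1 + x^2)) + x^a * cayley x^(b + 2) * (1 / (1 + x^2))
      = x^a * cayley x^b * (2 / (1 + x)^2)" by (simp only: weight)
qed

lemma momQ_diff: "momQ a b - momQ (a + 2) b = 2 * momP a (Suc b)"
proof -
  have "momQ (a + 2) b + moment a (Suc b) (\<lambda>_. 2) = momQ a b"
  proof (rule moment_add_eq[OF continuous_on_moment_weights(1) continuous_on_const])
    fix x :: real assume "x \<in> {0..1}"
    then have "1 + x \<noteq> 0" by auto
    have "x^(a + 2) * cayley x^b * W + x^a * cayley x^Suc b * 2 = x^a * cayley x^b * (x^2 * W + cayley x * 2)" for W
      by (simp add: power_add power2_eq_square algebra_simps)
    then have "x^(a + 2) * cayley x^b * (2 / (1 + x)^2) + x^a * cayley x^Suc b * 2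
        = x^a * cayley x^b * (x^2 * (2 / (1 + x)^2) + cayley x * 2)" .
    also have "x^2 * (2 / (1 + x)^2) + cayley x * 2 = 2 / (1 + x)^2"
      using \<open>1 + x \<noteq> 0\<close> by (simp add: cayley_def divide_simps) (simp add: power2_eq_square algebra_simps)
    finally show "x^(a + 2) * cayley x^b * (2 / (1 + x)^2) + x^a * cayley x^Suc b * 2
        = x^a * cayley x^b * (2 / (1 + x)^2)" .
  qed
  moreover have "moment a (Suc b) (\<lambda>_. 2) = 2 * momP a (Suc b)"
    by (simp add: moment_def mult.commute)
  ultimately show ?thesis by simp
qed

lemma cayley_kernel_recurrence:
  "cayley_kernel a (Suc b) - cayley_kernel (a + 2) (Suc b) = 2 * real (Suc b) / (real a + 1) * cayley_kernel (a + 1) (Suc b)"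
proof -
  have "cayley_kernel a (Suc b) - cayley_kernel (a + 2) (Suc b) = real (Suc b) * (2 * momP a (Suc b))"
    by (simp only: cayley_kernel_Suc_right right_diff_distrib[symmetric] momQ_diff)
  then show ?thesis by (simp add: cayley_kernel_def field_simps)
qed

lemma cayley_kernel_0_right [simp]: "cayley_kernel a 0 = 1"
  by (simp add: cayley_kernel_def momP_0_right of_nat_diff)

lemma cayley_kernel_nonneg: "0 \<le> cayley_kernel a b"
  unfolding cayley_kernel_def by (auto intro!: moment_nonneg mult_nonneg_nonneg)

lemma cayley_kernel_le_left:
  assumes "1 \<le> b"
  shows "cayley_kernel a b \<le> 1 / (real a + 1)"
proof (cases "a = 0")
  case False
  have "momP (a - 1) b \<le> integral {0..1} (\<lambda>x::real. x^(a - 1) - x^a)"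
    unfolding moment_def
  proof (rule integral_le[OF integrable_moment[OF continuous_on_const]])
    show "(\<lambda>x::real. x^(a - 1) - x^a) integrable_on {0..1}"
      by (intro integrable_continuous_real continuous_intros)
    fix x :: real assume x: "x \<in> {0..1}"
    have "cayley x ^ b \<le> cayley x ^ 1"
      using cayley_bounds[OF x] assms by (intro power_decreasing) auto
    also have "\<dots> \<le> 1 - x" using cayley_bounds(3)[OF x] by simp
    finally have "x^(a - 1) * cayley x^b \<le> x^(a - 1) * (1 - x)" using x by (intro mult_left_mono) auto
    also have "\<dots> = x^(a - 1) - x^a" using False by (simp add: algebra_simps power_eq_if)
    finally show "x^(a - 1) * cayley x^b * 1 \<le> x^(a - 1) - x^a" by simp
  qed
  also have "\<dots> = momP (a - 1) 0 - momP a 0"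
    unfolding moment_def by (simp add: integral_diff integrable_continuous_real continuous_intros)
  also have "\<dots> = 1 / real a - 1 / (real a + 1)"
    using False by (simp add: momP_0_right of_nat_diff)
  finally have "momP (a - 1) b \<le> 1 / real a - 1 / (real a + 1)" .
  then have "cayley_kernel a b \<le> real a * (1 / real a - 1 / (real a + 1))"
    using False by (simp add: cayley_kernel_def)
  also have "\<dots> = 1 / (real a + 1)" using False by (simp add: divide_simps)
  finally show ?thesis .
qed (simp add: cayley_kernel_def)

lemma has_integral_one_minus_cayley_mult_pow:
  "((\<lambda>x. (1 - cayley x) * cayley x^b * (2 / (1 + x)^2)) has_integral 1 / ((real b + 1) * (real b + 2))) {0..1}"
proof -
  define F where "F x = cayley x ^ Suc (Suc b) / real (Suc (Suc b)) - cayley x ^ Suc b / real (Suc b)" for x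
  have "((\<lambda>x. (1 - cayley x) * cayley x^b * (2 / (1 + x)^2)) has_integral (F 1 - F 0)) {0..1}"
  proof (rule fundamental_theorem_of_calculus)
    fix x :: real assume x: "x \<in> {0..1}"
    have "(F has_real_derivative
        real (Suc (Suc b)) * (- 2 / (1 + x)^2 * cayley x ^ (Suc (Suc b) - Suc 0)) / real (Suc (Suc b))
        - real (Suc b) * (- 2 / (1 + x)^2 * cayley x ^ (Suc b - Suc 0)) / real (Suc b)) (at x within {0..1})"
      unfolding F_def[abs_def] using x
      by (intro DERIV_diff DERIV_cdivide DERIV_power cayley_has_real_derivative) auto
    then show "(F has_vector_derivative (1 - cayley x) * cayley x^b * (2 / (1 + x)^2)) (at x within {0..1})"
      unfolding has_real_derivative_iff_has_vector_derivative[symmetric]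
      by (rule DERIV_cong) (simp del: of_nat_Suc, simp add: add_divide_distrib[symmetric] algebra_simps)
  qed simp
  moreover have "F 1 - F 0 = 1 / ((real b + 1) * (real b + 2))"
    by (simp add: F_def field_simps)
  ultimately show ?thesis by simp
qed

lemma cayley_kernel_le_right:
  assumes "1 \<le> a"
  shows "cayley_kernel a b \<le> 1 / (real b + 1)"
proof (cases b)
  case (Suc b')
  have "momQ a b' \<le> integral {0..1} (\<lambda>x. (1 - cayley x) * cayley x^b' * (2 / (1 + x)^2))"
    unfolding moment_def
  proof (rule integral_le[OF integrable_moment[OF continuous_on_moment_weights(1)]])
    show "(\<lambda>x. (1 - cayley x) * cayley x^b' * (2 / (1 + x)^2)) integrable_on {0..1}"
      using has_integral_one_minus_cayley_mult_pow by blast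
    fix x :: real assume x: "x \<in> {0..1}"
    have "x^a \<le> x^1" using x assms by (intro power_decreasing) auto
    also have "\<dots> \<le> 1 - cayley x" using cayley_bounds(3)[OF x] by simp
    finally show "x^a * cayley x^b' * (2 / (1 + x)^2) \<le> (1 - cayley x) * cayley x^b' * (2 / (1 + x)^2)"
      using cayley_bounds(1)[OF x] x by (intro mult_right_mono) auto
  qed
  also have "\<dots> = 1 / ((real b' + 1) * (real b' + 2))"
    using has_integral_one_minus_cayley_mult_pow by (rule integral_unique)
  finally show ?thesis using Suc by (simp add: cayley_kernel_Suc_right divide_simps ac_simps)
qed simp

lemma cayley_kernel_le_sqrt:
  assumes "1 \<le> a" "1 \<le> b"
  shows "\<bar>cayley_kernel a b\<bar> \<le> (real a + 1) powr (-1/2) * (real b + 1) powr (-1/2)"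
proof -
  have "cayley_kernel a b = cayley_kernel a b powr (1/2) * cayley_kernel a b powr (1/2)"
    using cayley_kernel_nonneg[of a b] by (simp add: powr_add[symmetric])
  also have "\<dots> \<le> (1 / (real a + 1)) powr (1/2) * (1 / (real b + 1)) powr (1/2)"
    using cayley_kernel_le_left[OF assms(2), of a] cayley_kernel_le_right[OF assms(1), of b] cayley_kernel_nonneg
    by (intro mult_mono powr_mono2) auto
  also have "\<dots> = (real a + 1) powr (-1/2) * (real b + 1) powr (-1/2)"
    by (simp add: powr_divide powr_minus_divide)
  finally show ?thesis using cayley_kernel_nonneg[of a b] by simp
qed

lemma momP_le:
  assumes "1 \<le> b"
  shows "momP n b \<le> 1 / ((real n + 1) * (real n + 2))"
  using cayley_kernel_le_left[OF assms, of "Suc n"] by (simp add: cayley_kernel_def divide_simps ac_simps)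

lemma momQ_le:
  assumes "1 \<le> a"
  shows "momQ a n \<le> 1 / ((real n + 1) * (real n + 2))"
  using cayley_kernel_le_right[OF assms, of "Suc n"] by (simp add: cayley_kernel_Suc_right divide_simps ac_simps)

section \<open>Telescoping inner sums\<close>

definition odd_ind :: "nat \<Rightarrow> real" where
  "odd_ind d = (if odd d then 1 else 0)"

definition odd_sign :: "nat \<Rightarrow> real" where
  "odd_sign d = (if odd d then (-1) ^ ((d - 1) div 2) else 0)"

lemma abs_odd_ind_le: "\<bar>odd_ind d\<bar> \<le> 1" and abs_odd_sign_le: "\<bar>odd_sign d\<bar> \<le> 1"
  by (simp_all add: odd_ind_def odd_sign_def)

lemma odd_ind_even [simp]: "even d \<Longrightarrow> odd_ind d = 0"
  and odd_sign_even [simp]: "even d \<Longrightarrow> odd_sign d = 0"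
  by (simp_all add: odd_ind_def odd_sign_def)

lemma has_sum_odd_offsets:
  fixes f :: "nat \<Rightarrow> real"
  assumes "((\<lambda>k. f (a' + 1 + 2 * k)) has_sum S) UNIV"
    and "\<And>a. a' < a \<Longrightarrow> even (a - a') \<Longrightarrow> f a = 0"
  shows "(f has_sum S) {a'<..}"
proof -
  define g where "g k = a' + 1 + 2 * k" for k
  have "inj g" by (auto simp: g_def inj_on_def)
  then have "(f has_sum S) (range g)"
    using assms(1) by (subst has_sum_reindex) (simp_all add: g_def o_def)
  moreover have "f a = 0" if "a \<in> {a'<..} - range g" for a
  proof -
    have "even (a - a')"
    proof (rule ccontr)
      assume "odd (a - a')"
      then obtain k where "a - a' = Suc (2 * k)" by (metis oddE Suc_eq_plus1)
      then have "a = g k" using that by (auto simp: g_def)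
      then show False using that by auto
    qed
    then show ?thesis using that assms(2) by auto
  qed
  moreover have "range g \<subseteq> {a'<..}" by (auto simp: g_def)
  ultimately show ?thesis using has_sum_cong_neutral[of "range g" "{a'<..}" f f S] by auto
qed

lemma summable_inverse_Suc_sq: "summable (\<lambda>k. inverse (real (Suc k) ^ 2))"
  using inverse_power_summable[of 2, where 'a=real] by (subst summable_Suc_iff) simp

lemma has_sum_telescope:
  fixes G :: "nat \<Rightarrow> real"
  assumes "G \<longlonglongrightarrow> 0" and "\<And>k. \<bar>G k - G (Suc k)\<bar> \<le> inverse (real (Suc k) ^ 2)"
  shows "((\<lambda>k. G k - G (Suc k)) has_sum G 0) UNIV"
proof -
  have "(\<lambda>k. inverse (real (Suc k) ^ 2)) summable_on UNIV"
    using summable_inverse_Suc_sq by (rule summable_nonneg_imp_summable_on) simp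
  then have "(\<lambda>k. norm (G k - G (Suc k))) summable_on UNIV"
    by (rule summable_on_comparison_test) (use assms(2) in auto)
  then have "(\<lambda>k. G k - G (Suc k)) summable_on UNIV" by (rule abs_summable_summable)
  moreover have "(\<lambda>k. G k - G (Suc k)) sums G 0" using telescope_sums'[OF assms(1)] by simp
  ultimately show ?thesis by (metis has_sum_imp_sums has_sum_infsum sums_unique2)
qed

lemma has_sum_alternating_telescope:
  fixes g d :: "nat \<Rightarrow> real"
  assumes "\<And>k. g k + g (Suc k) = d k" and "\<And>k. 0 \<le> g k"
    and "\<And>k. d k \<le> inverse (real (Suc k) ^ 2)"
  shows "((\<lambda>k. (-1)^k * d k) has_sum g 0) UNIV"
proof -
  define G where "G k = (-1)^k * g k" for k
  have "G \<longlonglongrightarrow> 0"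
  proof (rule Lim_null_comparison)
    show "(\<lambda>k. inverse (real (Suc k) ^ 2)) \<longlonglongrightarrow> 0"
      using summable_inverse_Suc_sq by (rule summable_LIMSEQ_zero)
    have "norm (G k) \<le> inverse (real (Suc k) ^ 2)" for k
    proof -
      have "norm (G k) = g k" using assms(2) by (simp add: G_def abs_mult)
      also have "\<dots> \<le> d k" using assms(1)[of k] assms(2)[of "Suc k"] by linarith
      finally show ?thesis using assms(3) by (rule order_trans)
    qed
    then show "\<forall>\<^sub>F k in sequentially. norm (G k) \<le> inverse (real (Suc k) ^ 2)" by simp
  qed
  have diff: "G k - G (Suc k) = (-1)^k * d k" for k
    by (simp add: G_def assms(1)[symmetric] algebra_simps)
  have "0 \<le> d k" for k using assms(1)[of k] assms(2)[of k] assms(2)[of "Suc k"] by linarith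
  then have "\<bar>G k - G (Suc k)\<bar> \<le> inverse (real (Suc k) ^ 2)" for k
    using assms(3)[of k] by (simp add: diff abs_mult)
  with \<open>G \<longlonglongrightarrow> 0\<close> have "((\<lambda>k. G k - G (Suc k)) has_sum G 0) UNIV"
    by (rule has_sum_telescope)
  then show ?thesis by (simp only: diff) (simp add: G_def)
qed

lemma inverse_Suc_sq_bound:
  "k \<le> n \<Longrightarrow> 1 / ((real n + 1) * (real n + 2)) \<le> inverse (real (Suc k) ^ 2)"
  by (simp add: inverse_eq_divide power2_eq_square frac_le mult_mono)

lemma has_sum_odd_sign_kernel_left:
  assumes "1 \<le> b"
  shows "((\<lambda>a. odd_sign (a - a') * cayley_kernel a b / real a) has_sum momK a' b) {a'<..}"
proof (rule has_sum_odd_offsets)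
  have "momP (a' + 2 * k) b \<le> inverse (real (Suc k) ^ 2)" for k
    using momP_le[OF assms, of "a' + 2 * k"] inverse_Suc_sq_bound[of k "a' + 2 * k"] by linarith
  then have "((\<lambda>k. (-1)^k * momP (a' + 2 * k) b) has_sum momK (a' + 2 * 0) b) UNIV"
    by (intro has_sum_alternating_telescope) (simp_all add: momP_split momK_nonneg)
  then show "((\<lambda>k. odd_sign (a' + 1 + 2 * k - a') * cayley_kernel (a' + 1 + 2 * k) b / real (a' + 1 + 2 * k))
      has_sum momK a' b) UNIV"
    by (simp add: odd_sign_def cayley_kernel_def)
qed simp

lemma has_sum_odd_sign_kernel_right:
  assumes "1 \<le> a"
  shows "((\<lambda>b. odd_sign (b - b') * cayley_kernel a b / real b) has_sum momK a b') {b'<..}"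
proof (rule has_sum_odd_offsets)
  have "momQ a (b' + 2 * k) \<le> inverse (real (Suc k) ^ 2)" for k
    using momQ_le[OF assms, of "b' + 2 * k"] inverse_Suc_sq_bound[of k "b' + 2 * k"] by linarith
  then have "((\<lambda>k. (-1)^k * momQ a (b' + 2 * k)) has_sum momK a (b' + 2 * 0)) UNIV"
    by (intro has_sum_alternating_telescope) (simp_all add: momQ_split momK_nonneg)
  then show "((\<lambda>k. odd_sign (b' + 1 + 2 * k - b') * cayley_kernel a (b' + 1 + 2 * k) / real (b' + 1 + 2 * k))
      has_sum momK a b') UNIV"
    using cayley_kernel_Suc_right[of a "b' + 2 * _"] by (simp add: odd_sign_def)
qed simp

lemma has_sum_odd_ind_kernel:
  assumes "1 \<le> b"
  shows "((\<lambda>a. odd_ind (a - a') * cayley_kernel a b / real a) has_sum cayley_kernel a' b / (2 * real b)) {a'<..}"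
proof (rule has_sum_odd_offsets)
  define G where "G k = cayley_kernel (a' + 2 * k) b / (2 * real b)" for k
  have diff: "G k - G (Suc k) = cayley_kernel (Suc (a' + 2 * k)) b / real (Suc (a' + 2 * k))" for k
  proof -
    obtain b' where b: "b = Suc b'" using assms by (cases b) auto
    have "G k - G (Suc k) = (cayley_kernel (a' + 2 * k) b - cayley_kernel (a' + 2 * k + 2) b) / (2 * real b)"
      by (simp add: G_def diff_divide_distrib)
    also have "\<dots> = (2 * real b / (real (a' + 2 * k) + 1) * cayley_kernel (Suc (a' + 2 * k)) b) / (2 * real b)"
      using cayley_kernel_recurrence[of "a' + 2 * k" b'] by (simp add: b)
    finally show ?thesis using assms by (simp add: add.commute)
  qed
  have "G \<longlonglongrightarrow> 0"
  proof (rule Lim_null_comparison[OF _ LIMSEQ_inverse_real_of_nat])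
    have "\<bar>G k\<bar> \<le> inverse (real (Suc k))" for k
    proof -
      have "\<bar>G k\<bar> \<le> cayley_kernel (a' + 2 * k) b"
        using cayley_kernel_nonneg[of "a' + 2 * k" b] assms by (simp add: G_def divide_simps mult_le_cancel_left1)
      also have "\<dots> \<le> 1 / (real (a' + 2 * k) + 1)" by (rule cayley_kernel_le_left[OF assms])
      also have "\<dots> \<le> inverse (real (Suc k))" by (simp add: inverse_eq_divide frac_le)
      finally show ?thesis .
    qed
    then show "\<forall>\<^sub>F k in sequentially. norm (G k) \<le> inverse (real (Suc k))" by simp
  qed
  moreover have "\<bar>G k - G (Suc k)\<bar> \<le> inverse (real (Suc k) ^ 2)" for k
    using momP_le[OF assms, of "a' + 2 * k"] inverse_Suc_sq_bound[of k "a' + 2 * k"]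
      moment_nonneg[of "\<lambda>_. 1" "a' + 2 * k" b]
    by (simp add: diff cayley_kernel_def)
  ultimately have "((\<lambda>k. G k - G (Suc k)) has_sum G 0) UNIV" by (rule has_sum_telescope)
  then show "((\<lambda>k. odd_ind (a' + 1 + 2 * k - a') * cayley_kernel (a' + 1 + 2 * k) b / real (a' + 1 + 2 * k))
      has_sum cayley_kernel a' b / (2 * real b)) UNIV"
    by (simp only: diff) (simp add: G_def odd_ind_def)
qed simp

section \<open>Averaging operators and the decay majorant\<close>

definition avg :: "(nat \<Rightarrow> real) \<Rightarrow> (nat \<Rightarrow> real) \<Rightarrow> nat \<Rightarrow> real" where
  "avg w c a = (\<Sum>a'<a. c a' * w (a - a')) / real a"

text \<open>Any exponent in \<open>(-1, -1/2)\<close> would do: averaging preserves the bound up to a factor, and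
  \<open>decay a * (a + 1) powr (-1/2)\<close> is summable.\<close>

definition decay :: "nat \<Rightarrow> real" where
  "decay a = (real a + 1) powr (-3/4)"

definition decays :: "(nat \<Rightarrow> real) \<Rightarrow> real \<Rightarrow> bool" where
  "decays c K \<longleftrightarrow> 0 \<le> K \<and> (\<forall>a. \<bar>c a\<bar> \<le> K * decay a)"

lemma avg_0 [simp]: "avg w c 0 = 0"
  by (simp add: avg_def)

lemma decay_pos: "0 < decay a"
  by (simp add: decay_def)

lemma powr_quarter_increment:
  "4 * real n powr (1/4) + (real n + 1) powr (-3/4) \<le> 4 * (real n + 1) powr (1/4)"
proof -
  define x where "x = real n powr (1/4)"
  define y where "y = (real n + 1) powr (1/4)"
  have x0: "0 \<le> x" and y0: "0 < y" and xy: "x \<le> y"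
    by (auto simp: x_def y_def intro: powr_mono2)
  have "x^4 = real n" "y^4 = real n + 1"
    by (cases "n = 0", simp_all add: x_def y_def powr_realpow[symmetric] powr_powr)
  then have "1 = (y - x) * (y^3 + y^2 * x + y * x^2 + x^3)"
    by (simp add: eval_nat_numeral algebra_simps)
  also have "\<dots> \<le> (y - x) * (4 * y^3)"
  proof (intro mult_left_mono)
    have "y^2 * x \<le> y^2 * y" "y * x^2 \<le> y * y^2" "x^3 \<le> y^3"
      using xy x0 y0 by (auto intro: mult_left_mono power_mono)
    then show "y^3 + y^2 * x + y * x^2 + x^3 \<le> 4 * y^3" by (simp add: eval_nat_numeral algebra_simps)
  qed (use xy in simp)
  finally have "1 / y^3 \<le> 4 * (y - x)"
    using y0 by (subst pos_divide_le_eq) (simp_all add: algebra_simps)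
  moreover have "(real n + 1) powr (-3/4) = 1 / y^3"
    by (simp add: y_def powr_minus_divide powr_realpow[symmetric] powr_powr)
  ultimately show ?thesis by (simp add: x_def y_def)
qed

lemma sum_decay_le: "(\<Sum>a<n. decay a) \<le> 4 * real n powr (1/4)"
proof (induction n)
  case (Suc n)
  then show ?case using powr_quarter_increment[of n] by (simp add: decay_def add.commute)
qed simp

lemma mean_decay_le:
  assumes "1 \<le> a"
  shows "(\<Sum>a'<a. decay a') / real a \<le> 8 * decay a"
proof -
  have a: "0 < real a" using assms by simp
  have "(real a + 1) powr (3/4) \<le> (2 * real a) powr (3/4)" using assms by (intro powr_mono2) auto
  also have "\<dots> \<le> 2 * real a powr (3/4)"
    using powr_mono[of "3/4" 1 2] by (simp add: powr_mult mult_right_mono)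
  finally have "real a powr (-3/4) \<le> 2 * decay a"
    using a by (simp add: decay_def powr_minus_divide divide_simps)
  moreover have "real a powr (1/4) / real a = real a powr (-3/4)"
    using a powr_diff[of "real a" "1/4" 1] by simp
  ultimately show ?thesis
    using sum_decay_le[of a] a by (simp add: divide_right_mono order_trans[OF divide_right_mono])
qed

lemma decays_avg:
  assumes c: "decays c K" and w: "\<And>d. \<bar>w d\<bar> \<le> 1"
  shows "decays (avg w c) (8 * K)"
  unfolding decays_def
proof (intro conjI allI)
  show "0 \<le> 8 * K" using c by (simp add: decays_def)
  fix a
  show "\<bar>avg w c a\<bar> \<le> 8 * K * decay a"
  proof (cases "a = 0")
    case True then show ?thesis using c decay_pos[of 0] by (simp add: decays_def)
  next
    case False
    have "\<bar>\<Sum>a'<a. c a' * w (a - a')\<bar> \<le> (\<Sum>a'<a. K * decay a')"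
    proof (rule order_trans[OF sum_abs sum_mono])
      fix a' assume "a' \<in> {..<a}"
      have "\<bar>c a' * w (a - a')\<bar> \<le> \<bar>c a'\<bar> * 1"
        unfolding abs_mult using w by (intro mult_left_mono) auto
      also have "\<dots> \<le> K * decay a'" using c by (simp add: decays_def)
      finally show "\<bar>c a' * w (a - a')\<bar> \<le> K * decay a'" .
    qed
    then have "\<bar>avg w c a\<bar> \<le> K * ((\<Sum>a'<a. decay a') / real a)"
      by (simp add: avg_def divide_right_mono sum_distrib_left)
    also have "\<dots> \<le> K * (8 * decay a)"
      using mean_decay_le[of a] False c by (intro mult_left_mono) (auto simp: decays_def)
    finally show ?thesis by simp
  qed
qed

lemma decays_funpow_avg:
  "decays c K \<Longrightarrow> (\<And>d. \<bar>w d\<bar> \<le> 1) \<Longrightarrow> decays ((avg w ^^ j) c) (8^j * K)"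
  by (induction j) (auto dest: decays_avg simp: mult.assoc)

lemma funpow_avg_at_0: "c 0 = 0 \<Longrightarrow> (avg w ^^ j) c 0 = 0"
  by (cases j) auto

lemma decays_abs_le: "decays e K \<Longrightarrow> (\<And>b. \<bar>f b\<bar> \<le> \<bar>e b\<bar>) \<Longrightarrow> decays f K"
  unfolding decays_def by (meson order_trans)

definition delta :: "nat \<Rightarrow> real" where
  "delta a = (if a = 0 then 1 else 0)"

lemma decays_delta: "decays delta 1"
  by (simp add: decays_def delta_def decay_def)

lemma summable_powr_five_quarters: "summable (\<lambda>n. (real n + 1) powr (-5/4))"
proof -
  have "summable (\<lambda>n. real (Suc n) powr (-5/4))"
    by (subst summable_Suc_iff) (simp add: summable_real_powr_iff)
  then show ?thesis by (simp add: add.commute)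
qed

lemma summable_on_powr_five_quarters_pair:
  "(\<lambda>(a, b). (real a + 1) powr (-5/4) * (real b + 1) powr (-5/4)) summable_on UNIV"
proof -
  define A where "A a = (real a + 1) powr (-5/4)" for a :: nat
  have A: "A summable_on UNIV"
    unfolding A_def using summable_powr_five_quarters by (rule summable_nonneg_imp_summable_on) simp
  have "(\<lambda>(a, b). A a * A b) summable_on (Sigma UNIV (\<lambda>_. UNIV))"
  proof (rule summable_on_SigmaI)
    show "((\<lambda>b. (\<lambda>(a, b). A a * A b) (a, b)) has_sum A a * infsum A UNIV) UNIV" for a
      using has_sum_cmult_right[OF has_sum_infsum[OF A], of "A a"] by simp
    show "(\<lambda>a. A a * infsum A UNIV) summable_on UNIV"
      using A by (rule summable_on_cmult_left)
  qed (auto simp: A_def)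
  then show ?thesis by (simp add: A_def)
qed

lemma summable_on_mean_decay_pair:
  "(\<lambda>(a, b). (\<Sum>a'<a. decay a') / real a * decay b * ((real a + 1) powr (-1/2) * (real b + 1) powr (-1/2)))
     summable_on UNIV"
proof (rule summable_on_comparison_test[OF summable_on_cmult_right[OF summable_on_powr_five_quarters_pair, of 8]],
    goal_cases)
  case (1 ab)
  obtain a b where ab: "ab = (a, b)" by fastforce
  have split_powr: "decay n * (real n + 1) powr (-1/2) = (real n + 1) powr (-5/4)" for n
    unfolding decay_def powr_add[symmetric] by simp
  have "(\<Sum>a'<a. decay a') / real a \<le> 8 * decay a"
    using mean_decay_le[of a] by (cases "a = 0") (auto simp: decay_def)
  then have "(\<Sum>a'<a. decay a') / real a * (decay b * ((real a + 1) powr (-1/2) * (real b + 1) powr (-1/2)))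
      \<le> 8 * decay a * (decay b * ((real a + 1) powr (-1/2) * (real b + 1) powr (-1/2)))"
    by (rule mult_right_mono) (simp add: decay_def)
  also have "\<dots> = 8 * ((real a + 1) powr (-5/4) * (real b + 1) powr (-5/4))"
    by (simp only: split_powr[symmetric] mult_ac)
  finally show ?case
    by (simp add: ab mult.assoc)
next
  case (2 ab)
  then show ?case by (auto simp: split_beta decay_def intro!: mult_nonneg_nonneg divide_nonneg_nonneg sum_nonneg)
qed

lemma summable_on_avg_triple:
  fixes c e w :: "nat \<Rightarrow> real" and Phi :: "nat \<Rightarrow> nat \<Rightarrow> real"
  assumes c: "decays c K" and e: "decays e K'" and e0: "e 0 = 0" and w: "\<And>d. \<bar>w d\<bar> \<le> 1"
    and Phi: "\<And>a b. 1 \<le> a \<Longrightarrow> 1 \<le> b \<Longrightarrow> \<bar>Phi a b\<bar> \<le> (real a + 1) powr (-1/2) * (real b + 1) powr (-1/2)"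
  shows "(\<lambda>((a, b), a'). c a' * w (a - a') / real a * e b * Phi a b) summable_on Sigma UNIV (\<lambda>(a, b). {..<a})"
proof -
  have K: "0 \<le> K" "0 \<le> K'" using c e by (auto simp: decays_def)
  define B where "B a b = (real a + 1) powr (-1/2) * (real b + 1) powr (-1/2)" for a b :: nat
  define G where "G = (\<lambda>((a, b), a'). K * K' * (decay a' / real a * decay b * B a b))"
  have G_nonneg: "0 \<le> G x" for x
    using K by (auto simp: G_def B_def decay_def split_beta intro!: mult_nonneg_nonneg divide_nonneg_nonneg)
  have "G summable_on Sigma UNIV (\<lambda>(a, b). {..<a})"
  proof (rule summable_on_SigmaI)
    show "((\<lambda>a'. G (ab, a')) has_sum K * K' * (\<lambda>(a, b). (\<Sum>a'<a. decay a') / real a * decay b * B a b) ab)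
        ((\<lambda>(a, b). {..<a}) ab)" for ab
      by (cases ab) (simp add: G_def has_sum_finiteI sum_distrib_left sum_distrib_right sum_divide_distrib)
    show "(\<lambda>ab. K * K' * (\<lambda>(a, b). (\<Sum>a'<a. decay a') / real a * decay b * B a b) ab) summable_on UNIV"
      using summable_on_mean_decay_pair unfolding B_def by (rule summable_on_cmult_right)
  qed (use G_nonneg in auto)
  moreover have "norm ((\<lambda>((a, b), a'). c a' * w (a - a') / real a * e b * Phi a b) x) \<le> G x"
    if "x \<in> Sigma UNIV (\<lambda>(a, b). {..<a})" for x
  proof -
    obtain a b a' where x: "x = ((a, b), a')" by (metis prod.collapse)
    with that have "a' < a" by simp
    show ?thesis
    proof (cases "b = 0")
      case True then show ?thesis using G_nonneg[of x] by (simp add: x e0)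
    next
      case False
      have "\<bar>c a'\<bar> * \<bar>w (a - a')\<bar> / real a * \<bar>e b\<bar> * \<bar>Phi a b\<bar> \<le> (K * decay a') * 1 / real a * (K' * decay b) * B a b"
        using c e w[of "a - a'"] Phi[of a b] \<open>a' < a\<close> False K decay_pos
        by (intro mult_mono divide_right_mono) (auto simp: decays_def B_def less_imp_le)
      then show ?thesis by (simp add: x G_def abs_mult mult_ac)
    qed
  qed
  ultimately have "(\<lambda>x. norm ((\<lambda>((a, b), a'). c a' * w (a - a') / real a * e b * Phi a b) x))
      summable_on Sigma UNIV (\<lambda>(a, b). {..<a})"
    by (rule summable_on_comparison_test) (simp_all only: norm_ge_zero)
  then show ?thesis by (rule abs_summable_summable)
qed

lemma has_sum_avg_pairing_transfer:
  fixes c e w :: "nat \<Rightarrow> real" and Phi Psi :: "nat \<Rightarrow> nat \<Rightarrow> real"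
  assumes summ: "(\<lambda>((a, b), a'). c a' * w (a - a') / real a * e b * Phi a b) summable_on Sigma UNIV (\<lambda>(a, b). {..<a})"
    and inner: "\<And>a' b. c a' \<noteq> 0 \<Longrightarrow> e b \<noteq> 0 \<Longrightarrow> ((\<lambda>a. w (a - a') * Phi a b / real a) has_sum Psi a' b) {a'<..}"
  shows "\<exists>S. ((\<lambda>(a, b). avg w c a * e b * Phi a b) has_sum S) UNIV
           \<and> ((\<lambda>(a', b). c a' * e b * Psi a' b) has_sum S) UNIV"
proof -
  define F where "F = (\<lambda>((a::nat, b::nat), a'::nat). c a' * w (a - a') / real a * e b * Phi a b)"
  obtain S where S: "(F has_sum S) (Sigma UNIV (\<lambda>(a, b). {..<a}))"
    using summ by (auto simp: F_def summable_on_def)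
  have "((\<lambda>(a, b). avg w c a * e b * Phi a b) has_sum S) UNIV"
  proof (rule has_sum_SigmaD[OF S])
    show "((\<lambda>a'. F (ab, a')) has_sum (\<lambda>(a, b). avg w c a * e b * Phi a b) ab) ((\<lambda>(a, b). {..<a}) ab)" for ab
      by (cases ab) (simp add: F_def avg_def has_sum_finiteI sum_divide_distrib sum_distrib_right)
  qed
  moreover have "((\<lambda>(a', b). c a' * e b * Psi a' b) has_sum S) UNIV"
  proof -
    define g where "g = (\<lambda>((a'::nat, b::nat), a::nat). ((a, b), a'))"
    have "bij_betw g (Sigma UNIV (\<lambda>(a', b). {a'<..})) (Sigma UNIV (\<lambda>(a, b). {..<a}))"
      by (rule bij_betwI[where g = g]) (auto simp: g_def)
    then have "((F \<circ> g) has_sum S) (Sigma UNIV (\<lambda>(a', b). {a'<..}))"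
      using S by (simp add: has_sum_reindex_bij_betw[symmetric] o_def)
    then show ?thesis
    proof (rule has_sum_SigmaD)
      fix ab :: "nat \<times> nat"
      obtain a' b where ab: "ab = (a', b)" by fastforce
      have "((\<lambda>a. (c a' * e b) * (w (a - a') * Phi a b / real a)) has_sum (c a' * e b) * Psi a' b) {a'<..}"
      proof (cases "c a' = 0 \<or> e b = 0")
        case False then show ?thesis by (intro has_sum_cmult_right inner) auto
      qed auto
      then show "((\<lambda>a. (F \<circ> g) (ab, a)) has_sum (\<lambda>(a', b). c a' * e b * Psi a' b) ab) ((\<lambda>(a', b). {a'<..}) ab)"
        by (simp add: ab F_def g_def mult_ac)
    qed
  qed
  ultimately show ?thesis by blast
qed

section \<open>Duality for the kernel pairing\<close>

definition kernel_pairing :: "(nat \<Rightarrow> real) \<Rightarrow> (nat \<Rightarrow> real) \<Rightarrow> real \<Rightarrow> bool" where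
  "kernel_pairing c e S \<longleftrightarrow> ((\<lambda>(a, b). c a * e b * cayley_kernel a b) has_sum S) UNIV"

lemma kernel_pairing_unique: "kernel_pairing c e S \<Longrightarrow> kernel_pairing c e S' \<Longrightarrow> S = S'"
  unfolding kernel_pairing_def by (rule has_sum_unique)

lemma has_sum_swap_pair:
  "((\<lambda>(x, y). f x y) has_sum S) UNIV \<Longrightarrow> ((\<lambda>(y, x). f x y) has_sum S) UNIV"
  using has_sum_swap[where f = "\<lambda>(x, y). f x y" and A = UNIV and B = UNIV] by simp

lemma kernel_pairing_delta: "kernel_pairing delta e S \<Longrightarrow> (e has_sum S) UNIV"
proof -
  assume "kernel_pairing delta e S"
  then have "((\<lambda>(a, b). delta a * e b * cayley_kernel a b) has_sum S) (Pair 0 ` UNIV)"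
    unfolding kernel_pairing_def by (subst (asm) has_sum_cong_neutral[where T = "Pair 0 ` UNIV"]) (auto simp: delta_def)
  then show "(e has_sum S) UNIV"
    by (subst (asm) has_sum_reindex) (auto simp: inj_on_def o_def delta_def cayley_kernel_def)
qed

lemma kernel_pairing_avg_odd_sign:
  assumes c: "decays c K" and e: "decays e K'" and c0: "c 0 = 0" and e0: "e 0 = 0"
  shows "\<exists>S. kernel_pairing (avg odd_sign c) e S \<and> kernel_pairing c (avg odd_sign e) S"
proof -
  have "\<exists>S. ((\<lambda>(a, b). avg odd_sign c a * e b * cayley_kernel a b) has_sum S) UNIV
          \<and> ((\<lambda>(a', b). c a' * e b * momK a' b) has_sum S) UNIV"
  proof (rule has_sum_avg_pairing_transfer[OF summable_on_avg_triple[OF c e e0 abs_odd_sign_le]])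
    fix a' b assume "e b \<noteq> 0"
    with e0 have "1 \<le> b" by (cases b) auto
    then show "((\<lambda>a. odd_sign (a - a') * cayley_kernel a b / real a) has_sum momK a' b) {a'<..}"
      by (rule has_sum_odd_sign_kernel_left)
  qed (rule cayley_kernel_le_sqrt)
  then obtain S1 where S1: "kernel_pairing (avg odd_sign c) e S1"
    and S1': "((\<lambda>(a', b). c a' * e b * momK a' b) has_sum S1) UNIV"
    unfolding kernel_pairing_def by blast
  have "\<exists>S. ((\<lambda>(b, a). avg odd_sign e b * c a * cayley_kernel a b) has_sum S) UNIV
          \<and> ((\<lambda>(b', a). e b' * c a * momK a b') has_sum S) UNIV"
  proof (rule has_sum_avg_pairing_transfer[OF summable_on_avg_triple[OF e c c0 abs_odd_sign_le]])
    fix b' a assume "c a \<noteq> 0"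
    with c0 have "1 \<le> a" by (cases a) auto
    then show "((\<lambda>b. odd_sign (b - b') * cayley_kernel a b / real b) has_sum momK a b') {b'<..}"
      by (rule has_sum_odd_sign_kernel_right)
  qed (metis cayley_kernel_le_sqrt mult.commute)
  then obtain S2 where S2: "((\<lambda>(b, a). avg odd_sign e b * c a * cayley_kernel a b) has_sum S2) UNIV"
    and S2': "((\<lambda>(b', a). e b' * c a * momK a b') has_sum S2) UNIV"
    by blast
  have "S1 = S2"
    using S1' has_sum_swap_pair[OF S2'] by (simp add: mult.commute has_sum_unique)
  moreover have "kernel_pairing c (avg odd_sign e) S2"
    using has_sum_swap_pair[OF S2] by (simp add: kernel_pairing_def mult.commute)
  ultimately show ?thesis using S1 by blast
qed

lemma kernel_pairing_avg_odd_ind: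
  assumes c: "decays c K" and e: "decays e K'" and e0: "e 0 = 0"
  shows "\<exists>S. kernel_pairing (avg odd_ind c) e S \<and> kernel_pairing c (\<lambda>b. e b / (2 * real b)) S"
proof -
  have "\<exists>S. ((\<lambda>(a, b). avg odd_ind c a * e b * cayley_kernel a b) has_sum S) UNIV
          \<and> ((\<lambda>(a', b). c a' * e b * (cayley_kernel a' b / (2 * real b))) has_sum S) UNIV"
  proof (rule has_sum_avg_pairing_transfer[OF summable_on_avg_triple[OF c e e0 abs_odd_ind_le]])
    fix a' b assume "e b \<noteq> 0"
    with e0 have "1 \<le> b" by (cases b) auto
    then show "((\<lambda>a. odd_ind (a - a') * cayley_kernel a b / real a) has_sum cayley_kernel a' b / (2 * real b)) {a'<..}"
      by (rule has_sum_odd_ind_kernel)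
  qed (rule cayley_kernel_le_sqrt)
  then show ?thesis
    unfolding kernel_pairing_def by (simp add: mult_ac)
qed

text \<open>The last conjunct only serves to carry the induction.\<close>

lemma partial_sum_odd_sign_div:
  "\<exists>n. (\<Sum>a\<in>{a'<..N}. odd_sign (a - a') / real a) = momK a' 0 - (-1)^n * momK (a' + 2 * n) 0
        \<and> N \<le> a' + 2 * n \<and> (a' \<le> N \<longrightarrow> a' + 2 * n \<le> N + 1)"
proof (induction N)
  case (Suc N)
  then obtain n where IH: "(\<Sum>a\<in>{a'<..N}. odd_sign (a - a') / real a) = momK a' 0 - (-1)^n * momK (a' + 2 * n) 0"
      "N \<le> a' + 2 * n" "a' \<le> N \<longrightarrow> a' + 2 * n \<le> N + 1" by blast
  show ?case
  proof (cases "a' \<le> N")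
    case False
    then show ?thesis by (intro exI[of _ 0]) auto
  next
    case True
    then have split: "(\<Sum>a\<in>{a'<..Suc N}. odd_sign (a - a') / real a)
        = (\<Sum>a\<in>{a'<..N}. odd_sign (a - a') / real a) + odd_sign (Suc N - a') / real (Suc N)"
      by (simp add: atLeastSucAtMost_greaterThanAtMost[symmetric])
    show ?thesis
    proof (cases "a' + 2 * n = N")
      case False
      with IH True have "a' + 2 * n = Suc N" by auto
      then have "Suc N - a' = 2 * n" by simp
      then show ?thesis using IH split by (intro exI[of _ n]) auto
    next
      case N: True
      then have "Suc N - a' = Suc (2 * n)" by simp
      then have "odd_sign (Suc N - a') / real (Suc N) = (-1)^n * momP (a' + 2 * n) 0"
        using N by (simp add: odd_sign_def momP_0_right add.commute)
      then show ?thesis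
        using split IH(1) N by (intro exI[of _ "Suc n"]) (auto simp: momP_split algebra_simps)
    qed
  qed
qed (intro exI[of _ 0], simp)

lemma partial_sum_odd_sign_div_error:
  "\<bar>(\<Sum>a\<in>{a'<..N}. odd_sign (a - a') / real a) - momK a' 0\<bar> \<le> 1 / (real N + 1)"
proof -
  obtain n where n: "(\<Sum>a\<in>{a'<..N}. odd_sign (a - a') / real a) = momK a' 0 - (-1)^n * momK (a' + 2 * n) 0"
    "N \<le> a' + 2 * n" using partial_sum_odd_sign_div by blast
  have "\<bar>(\<Sum>a\<in>{a'<..N}. odd_sign (a - a') / real a) - momK a' 0\<bar> = momK (a' + 2 * n) 0"
    using n(1) by (simp add: abs_mult momK_nonneg)
  also have "\<dots> \<le> 1 / (real (a' + 2 * n) + 1)" by (rule momK_0_right_le)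
  also have "\<dots> \<le> 1 / (real N + 1)" using n(2) by (simp add: frac_le)
  finally show ?thesis .
qed

lemma summable_decays_momK:
  assumes "decays c K"
  shows "summable (\<lambda>a. c a * momK a 0)"
proof (rule summable_comparison_test'[OF summable_mult[OF summable_powr_five_quarters, of K]])
  fix a
  have "\<bar>c a\<bar> * momK a 0 \<le> (K * decay a) * (1 / (real a + 1))"
    using assms momK_0_right_le[of a] momK_nonneg decay_pos[of a]
    by (intro mult_mono) (auto simp: decays_def)
  also have "\<dots> = K * (real a + 1) powr (-7/4)"
    using powr_diff[of "real a + 1" "-3/4" 1] by (simp add: decay_def)
  also have "\<dots> \<le> K * (real a + 1) powr (-5/4)"
    using assms by (intro mult_left_mono powr_mono) (auto simp: decays_def)
  finally show "norm (c a * momK a 0) \<le> K * (real a + 1) powr (-5/4)"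
    by (simp add: abs_mult momK_nonneg)
qed

text \<open>This series need not converge absolutely, so the order of summation cannot be swapped wholesale:
  the partial sums are regrouped by hand and the tails of the inner alternating series bounded directly.\<close>

lemma avg_odd_sign_sums:
  assumes c: "decays c K"
  shows "avg odd_sign c sums (\<Sum>a. c a * momK a 0)"
proof -
  have K: "0 \<le> K" using c by (simp add: decays_def)
  define err where "err a' N = (\<Sum>a\<in>{a'<..N}. odd_sign (a - a') / real a) - momK a' 0" for a' N
  have partial: "(\<Sum>a\<le>N. avg odd_sign c a) = (\<Sum>a'<N. c a' * momK a' 0) + (\<Sum>a'<N. c a' * err a' N)" for N
  proof -
    have "(\<Sum>a\<le>N. avg odd_sign c a) = (\<Sum>a'<N. \<Sum>a\<in>{Suc a'..N}. c a' * odd_sign (a - a') / real a)"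
      unfolding avg_def sum_divide_distrib by (rule sum.nested_swap')
    then show ?thesis
      by (simp add: err_def atLeastSucAtMost_greaterThanAtMost sum_distrib_left sum.distrib[symmetric] algebra_simps)
  qed
  have "(\<lambda>N. \<Sum>a'<N. c a' * err a' N) \<longlonglongrightarrow> 0"
  proof (rule Lim_null_comparison)
    have "(\<lambda>N. K * (8 * decay (Suc N))) \<longlonglongrightarrow> K * (8 * 0)"
      unfolding decay_def by (intro tendsto_intros) real_asymp
    then show "(\<lambda>N. K * (8 * decay (Suc N))) \<longlonglongrightarrow> 0" by simp
    have "norm (\<Sum>a'<N. c a' * err a' N) \<le> K * (8 * decay (Suc N))" for N
    proof -
      have "\<bar>c a' * err a' N\<bar> \<le> K * decay a' * (1 / (real N + 1))" for a'
        unfolding abs_mult err_def using c partial_sum_odd_sign_div_error[of a' N] K decay_pos[of a']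
        by (intro mult_mono) (auto simp: decays_def)
      then have "norm (\<Sum>a'<N. c a' * err a' N) \<le> (\<Sum>a'<N. K * decay a' * (1 / (real N + 1)))"
        unfolding real_norm_def by (intro order_trans[OF sum_abs sum_mono])
      also have "\<dots> \<le> (\<Sum>a'<Suc N. K * decay a' * (1 / (real N + 1)))"
        using K decay_pos[THEN less_imp_le] by (intro sum_mono2) (auto intro!: divide_nonneg_nonneg mult_nonneg_nonneg)
      also have "\<dots> = K * ((\<Sum>a'<Suc N. decay a') / real (Suc N))"
        unfolding sum_distrib_left sum_divide_distrib by (intro sum.cong) (simp_all add: add.commute)
      also have "\<dots> \<le> K * (8 * decay (Suc N))"
        using mean_decay_le[of "Suc N"] K by (intro mult_left_mono) auto
      finally show ?thesis .
    qed
    then show "\<forall>\<^sub>F N in sequentially. norm (\<Sum>a'<N. c a' * err a' N) \<le> K * (8 * decay (Suc N))"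
      by simp
  qed
  then have "(\<lambda>N. (\<Sum>a'<N. c a' * momK a' 0) + (\<Sum>a'<N. c a' * err a' N)) \<longlonglongrightarrow> (\<Sum>a. c a * momK a 0) + 0"
    by (intro tendsto_add summable_LIMSEQ summable_decays_momK[OF c])
  then show ?thesis by (simp add: sums_def_le partial)
qed

lemma kernel_pairing_avg_odd_sign_delta:
  assumes c: "decays c K" and c0: "c 0 = 0"
  shows "kernel_pairing c (avg odd_sign delta) (\<Sum>a. c a * momK a 0)"
proof -
  have "\<exists>S. ((\<lambda>(b, a). avg odd_sign delta b * c a * cayley_kernel a b) has_sum S) UNIV
          \<and> ((\<lambda>(b', a). delta b' * c a * momK a b') has_sum S) UNIV"
  proof (rule has_sum_avg_pairing_transfer[OF summable_on_avg_triple[OF decays_delta c c0 abs_odd_sign_le]])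
    fix b' a assume "c a \<noteq> 0"
    with c0 have "1 \<le> a" by (cases a) auto
    then show "((\<lambda>b. odd_sign (b - b') * cayley_kernel a b / real b) has_sum momK a b') {b'<..}"
      by (rule has_sum_odd_sign_kernel_right)
  qed (metis cayley_kernel_le_sqrt mult.commute)
  then obtain S where S: "((\<lambda>(b, a). avg odd_sign delta b * c a * cayley_kernel a b) has_sum S) UNIV"
    and S': "((\<lambda>(b', a). delta b' * c a * momK a b') has_sum S) UNIV" by blast
  have "kernel_pairing delta (\<lambda>a. c a * momK a 0) S"
    using S' unfolding kernel_pairing_def
    by (rule has_sum_cong[THEN iffD1, rotated]) (auto simp: delta_def cayley_kernel_def)
  then have "S = (\<Sum>a. c a * momK a 0)"
    by (metis kernel_pairing_delta has_sum_imp_sums sums_unique)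
  moreover have "kernel_pairing c (avg odd_sign delta) S"
    using has_sum_swap_pair[OF S] by (simp add: kernel_pairing_def mult.commute)
  ultimately show ?thesis by simp
qed

lemma kernel_pairing_funpow_avg_odd_sign:
  assumes "decays c K" "decays e K'" "c 0 = 0" "e 0 = 0"
    and "kernel_pairing ((avg odd_sign ^^ j) c) e S"
  shows "kernel_pairing c ((avg odd_sign ^^ j) e) S"
  using assms
proof (induction j arbitrary: c K)
  case (Suc j)
  have "kernel_pairing (avg odd_sign c) ((avg odd_sign ^^ j) e) S"
    using Suc.prems by (intro Suc.IH[OF decays_avg[OF _ abs_odd_sign_le]]) (simp_all add: funpow_swap1)
  moreover obtain S' where "kernel_pairing (avg odd_sign c) ((avg odd_sign ^^ j) e) S'"
    and "kernel_pairing c (avg odd_sign ((avg odd_sign ^^ j) e)) S'"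
    using kernel_pairing_avg_odd_sign[OF Suc.prems(1) decays_funpow_avg[where w = odd_sign, OF Suc.prems(2) abs_odd_sign_le]
        Suc.prems(3) funpow_avg_at_0[where c = e, OF Suc.prems(4)]] by blast
  ultimately show ?case by (metis kernel_pairing_unique funpow.simps(2) o_apply)
qed simp

lemma kernel_pairing_funpow_avg_odd_ind:
  assumes "decays c K" "decays e K'" "e 0 = 0"
    and "kernel_pairing ((avg odd_ind ^^ j) c) e S"
  shows "kernel_pairing c (\<lambda>b. e b / (2 * real b) ^ j) S"
  using assms
proof (induction j arbitrary: e K')
  case (Suc j)
  obtain S' where "kernel_pairing (avg odd_ind ((avg odd_ind ^^ j) c)) e S'"
    and S': "kernel_pairing ((avg odd_ind ^^ j) c) (\<lambda>b. e b / (2 * real b)) S'"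
    using kernel_pairing_avg_odd_ind[OF decays_funpow_avg[where w = odd_ind, OF Suc.prems(1) abs_odd_ind_le] Suc.prems(2,3)] by blast
  then have "S' = S" using Suc.prems(4) by (simp add: kernel_pairing_unique)
  have "decays (\<lambda>b. e b / (2 * real b)) K'"
    by (rule decays_abs_le[OF Suc.prems(2)]) (simp add: abs_div divide_le_eq abs_mult mult_le_cancel_left1)
  from Suc.IH[OF Suc.prems(1) this _ S'[unfolded \<open>S' = S\<close>]] Suc.prems(3)
  show ?case by (simp add: divide_divide_eq_left)
qed simp

lemma funpow_avg_odd_sign_delta_sums_eq:
  assumes "1 \<le> r"
  shows "\<exists>X. (avg odd_sign ^^ r) ((avg odd_ind ^^ p) delta) sums X
           \<and> (\<lambda>b. (avg odd_sign ^^ r) delta b / (2 * real b) ^ p) sums X"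
proof -
  obtain r' where r: "r = Suc r'" using assms by (cases r) auto
  define A where "A = (avg odd_ind ^^ p) delta"
  define c where "c = (avg odd_sign ^^ r') A"
  have dA: "decays A (8^p * 1)" and dc: "decays c (8^r' * (8^p * 1))"
    unfolding A_def c_def by (intro decays_funpow_avg decays_delta abs_odd_ind_le abs_odd_sign_le)+
  have sums: "(avg odd_sign ^^ r) A sums (\<Sum>a. c a * momK a 0)"
    unfolding r c_def using avg_odd_sign_sums[OF dc] by (simp add: c_def)
  show ?thesis
  proof (cases p)
    case 0
    then show ?thesis using sums by (auto simp: A_def)
  next
    case (Suc p')
    then have "A 0 = 0" by (simp add: A_def)
    then have "kernel_pairing c (avg odd_sign delta) (\<Sum>a. c a * momK a 0)"
      using funpow_avg_at_0 by (intro kernel_pairing_avg_odd_sign_delta[OF dc]) (simp add: c_def)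
    then have "kernel_pairing A ((avg odd_sign ^^ r') (avg odd_sign delta)) (\<Sum>a. c a * momK a 0)"
      unfolding c_def using \<open>A 0 = 0\<close>
      by (intro kernel_pairing_funpow_avg_odd_sign[OF dA decays_avg[OF decays_delta abs_odd_sign_le]]) auto
    then have "kernel_pairing delta (\<lambda>b. (avg odd_sign ^^ r) delta b / (2 * real b) ^ p) (\<Sum>a. c a * momK a 0)"
      unfolding A_def r
      by (intro kernel_pairing_funpow_avg_odd_ind[OF decays_delta decays_funpow_avg[OF decays_delta abs_odd_sign_le]])
         (simp_all add: funpow_swap1 funpow_avg_at_0)
    then have "(\<lambda>b. (avg odd_sign ^^ r) delta b / (2 * real b) ^ p) sums (\<Sum>a. c a * momK a 0)"
      by (intro has_sum_imp_sums kernel_pairing_delta)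
    with sums show ?thesis by (auto simp: A_def)
  qed
qed

section \<open>The truncated sums as iterated averages\<close>

text \<open>\<open>Tpart\<close> read from the outermost index inwards: \<open>nest ks j h n\<close> is the total weight of the
  index chains that end at \<open>n\<close>.\<close>

fun nest :: "(nat \<times> bool) list \<Rightarrow> nat \<Rightarrow> (nat \<Rightarrow> real) \<Rightarrow> nat \<Rightarrow> real" where
  "nest [] j h = h"
| "nest ((k, b) # ks) j h =
     nest ks (Suc j) (\<lambda>n. (\<Sum>m<n. h m) * ((if b then (-1) ^ n else 1) / (2 * real n - real j) ^ k))"

lemma sum_mult_Tpart: "(\<Sum>m\<le>N. h m * Tpart ks j m N) = (\<Sum>n\<le>N. nest ks j h n)"
proof (induction ks arbitrary: j h)
  case (Cons kb ks)
  obtain k b where kb: "kb = (k, b)" by fastforce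
  define w where "w n = (if b then (-1) ^ n else 1) / (2 * real n - real j) ^ k" for n :: nat
  have "(\<Sum>m\<le>N. h m * Tpart (kb # ks) j m N) = (\<Sum>m<N. \<Sum>n\<in>{Suc m..N}. h m * (w n * Tpart ks (Suc j) n N))"
    by (simp add: kb w_def sum_distrib_left atLeastSucAtMost_greaterThanAtMost lessThan_Suc_atMost[symmetric])
  also have "\<dots> = (\<Sum>n\<le>N. \<Sum>m<n. h m * (w n * Tpart ks (Suc j) n N))"
    by (rule sum.nested_swap'[symmetric])
  also have "\<dots> = (\<Sum>n\<le>N. ((\<Sum>m<n. h m) * w n) * Tpart ks (Suc j) n N)"
    by (simp add: sum_distrib_right mult.assoc)
  also have "\<dots> = (\<Sum>n\<le>N. nest ks (Suc j) (\<lambda>n. (\<Sum>m<n. h m) * w n) n)" by (rule Cons.IH)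
  finally show ?case by (simp add: kb w_def)
qed simp

lemma Tsum_eq_sum_nest: "Tsum ks N = 2 ^ length ks * (\<Sum>n\<le>N. nest ks 1 delta n)"
  using sum_mult_Tpart[of delta ks 1 N] by (simp add: Tsum_def delta_def sum.atMost_shift)

text \<open>In the variable \<open>m = 2 n - j\<close> consecutive indices differ by an odd amount, and \<open>(-1)^n\<close>
  becomes \<open>(-1)^((m + j) div 2)\<close>.\<close>

definition odd_step :: "nat \<Rightarrow> bool \<Rightarrow> nat \<Rightarrow> (nat \<Rightarrow> real) \<Rightarrow> nat \<Rightarrow> real" where
  "odd_step k b j G m =
     (\<Sum>m'<m. G m' * odd_ind (m - m')) * (if b then (-1) ^ ((m + j) div 2) else 1) / real m ^ k"

fun odd_nest :: "(nat \<times> bool) list \<Rightarrow> nat \<Rightarrow> (nat \<Rightarrow> real) \<Rightarrow> nat \<Rightarrow> real" where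
  "odd_nest [] j G = G"
| "odd_nest ((k, b) # ks) j G = odd_nest ks (Suc j) (odd_step k b j G)"

text \<open>\<open>F\<close> is \<open>G\<close> read in the variable \<open>n = (m + i) / 2\<close>.\<close>

definition shifted :: "nat \<Rightarrow> (nat \<Rightarrow> real) \<Rightarrow> (nat \<Rightarrow> real) \<Rightarrow> bool" where
  "shifted i F G \<longleftrightarrow> (\<forall>n. F n = (if i \<le> 2 * n then G (2 * n - i) else 0))
                      \<and> (\<forall>m. G m \<noteq> 0 \<longrightarrow> i \<le> m \<and> even (m + i))"

lemma shifted_delta: "shifted 0 delta delta"
  by (simp add: shifted_def delta_def)

lemma sum_lessThan_shifted:
  assumes "shifted i F G"
  shows "(\<Sum>n<n0. F n) = (\<Sum>m<2 * n0 - i. G m)"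
proof (induction n0)
  case (Suc n0)
  have F: "F n0 = (if i \<le> 2 * n0 then G (2 * n0 - i) else 0)"
    and G: "\<And>m. G m \<noteq> 0 \<Longrightarrow> i \<le> m \<and> even (m + i)" using assms by (auto simp: shifted_def)
  show ?case
  proof (cases "i \<le> 2 * n0")
    case True
    have "G (Suc (2 * n0 - i)) = 0" using G[of "Suc (2 * n0 - i)"] True by auto
    then show ?thesis using Suc True F by (simp add: Suc_diff_le)
  next
    case False
    then have "2 * Suc n0 - i \<le> 1" by simp
    moreover have "G 0 = 0" using G[of 0] False by auto
    ultimately have "(\<Sum>m<2 * Suc n0 - i. G m) = 0" by (cases "2 * Suc n0 - i") auto
    then show ?thesis using Suc False F by simp
  qed
qed simp

lemma shifted_step:
  assumes "shifted i F G"
  shows "shifted (Suc i) (\<lambda>n. (\<Sum>m<n. F m) * ((if b then (-1) ^ n else 1) / (2 * real n - real (Suc i)) ^ k))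
                         (odd_step k b (Suc i) G)"
  unfolding shifted_def
proof (rule conjI; intro allI impI)
  have G: "\<And>m. G m \<noteq> 0 \<Longrightarrow> i \<le> m \<and> even (m + i)" using assms by (auto simp: shifted_def)
  fix n
  show "(\<Sum>m<n. F m) * ((if b then (-1) ^ n else 1) / (2 * real n - real (Suc i)) ^ k)
      = (if Suc i \<le> 2 * n then odd_step k b (Suc i) G (2 * n - Suc i) else 0)"
  proof (cases "Suc i \<le> 2 * n")
    case True
    have "G (2 * n - Suc i) = 0" using G[of "2 * n - Suc i"] True by auto
    then have "(\<Sum>m'<2 * n - i. G m') = (\<Sum>m'<2 * n - Suc i. G m')"
      using True by (simp add: Suc_diff_Suc[symmetric] del: Suc_diff_Suc)
    also have "\<dots> = (\<Sum>m'<2 * n - Suc i. G m' * odd_ind (2 * n - Suc i - m'))"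
    proof (rule sum.cong)
      fix m' assume "m' \<in> {..<2 * n - Suc i}"
      then show "G m' = G m' * odd_ind (2 * n - Suc i - m')"
        using G[of m'] True by (cases "G m' = 0") (auto simp: odd_ind_def)
    qed simp
    finally have "(\<Sum>m<n. F m) = (\<Sum>m'<2 * n - Suc i. G m' * odd_ind (2 * n - Suc i - m'))"
      using sum_lessThan_shifted[OF assms] by simp
    moreover have "real (2 * n - Suc i) = 2 * real n - real (Suc i)" "(2 * n - Suc i + Suc i) div 2 = n"
      using True by (simp_all add: of_nat_diff)
    ultimately show ?thesis using True by (simp add: odd_step_def)
  next
    case False
    then have "(\<Sum>m<n. F m) = 0" using assms by (auto simp: shifted_def intro!: sum.neutral)
    then show ?thesis using False by simp
  qed
next
  have G: "\<And>m. G m \<noteq> 0 \<Longrightarrow> i \<le> m \<and> even (m + i)" using assms by (auto simp: shifted_def)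
  fix m assume "odd_step k b (Suc i) G m \<noteq> 0"
  then have "(\<Sum>m'<m. G m' * odd_ind (m - m')) \<noteq> 0" by (auto simp: odd_step_def)
  then obtain m' where "m' \<in> {..<m}" "G m' * odd_ind (m - m') \<noteq> 0"
    by (rule sum.not_neutral_contains_not_neutral)
  then have "m' < m" "G m' \<noteq> 0" "odd (m - m')" by (auto simp: odd_ind_def split: if_splits)
  then show "Suc i \<le> m \<and> even (m + Suc i)" using G[of m'] by auto
qed

lemma shifted_nest: "shifted i F G \<Longrightarrow> shifted (i + length ks) (nest ks (Suc i) F) (odd_nest ks (Suc i) G)"
proof (induction ks arbitrary: i F G)
  case (Cons kb ks)
  obtain k b where "kb = (k, b)" by fastforce
  with Cons.IH[OF shifted_step[OF Cons.prems, of b k]] show ?case by simp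
qed simp

lemma Tsum_eq_sum_odd_nest: "Tsum ks N = 2 ^ length ks * (\<Sum>m<2 * Suc N - length ks. odd_nest ks 1 delta m)"
  using Tsum_eq_sum_nest[of ks N] sum_lessThan_shifted[OF shifted_nest[OF shifted_delta, of ks], of "Suc N"]
  by (simp add: lessThan_Suc_atMost)

lemma Tsum_tendsto: "odd_nest ks 1 delta sums L \<Longrightarrow> Tsum ks \<longlonglongrightarrow> 2 ^ length ks * L"
proof -
  assume "odd_nest ks 1 delta sums L"
  moreover have "filterlim (\<lambda>N. 2 * Suc N - length ks) sequentially sequentially"
    unfolding filterlim_at_top eventually_sequentially
  proof
    show "\<exists>N. \<forall>n\<ge>N. Z \<le> 2 * Suc n - length ks" for Z by (rule exI[of _ "Z + length ks"]) auto
  qed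
  ultimately have "(\<lambda>N. \<Sum>m<2 * Suc N - length ks. odd_nest ks 1 delta m) \<longlonglongrightarrow> L"
    unfolding sums_def by (rule filterlim_compose)
  then show ?thesis
    unfolding Tsum_eq_sum_odd_nest by (rule tendsto_mult_left)
qed

section \<open>The two sides of the identity\<close>

definition half_sign :: "nat \<Rightarrow> nat \<Rightarrow> real" where
  "half_sign j m = (-1) ^ ((m + j) div 2)"

definition parity_supported :: "(nat \<Rightarrow> real) \<Rightarrow> nat \<Rightarrow> bool" where
  "parity_supported H i \<longleftrightarrow> (\<forall>m. H m \<noteq> 0 \<longrightarrow> even (m + i))"

lemma parity_supported_delta: "parity_supported delta 0"
  by (simp add: parity_supported_def delta_def)

lemma parity_supported_avg:
  assumes H: "parity_supported H i" and w: "\<And>d. even d \<Longrightarrow> w d = 0"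
  shows "parity_supported (avg w H) (Suc i)"
  unfolding parity_supported_def
proof (intro allI impI)
  fix m assume "avg w H m \<noteq> 0"
  then have "(\<Sum>m'<m. H m' * w (m - m')) \<noteq> 0" by (auto simp: avg_def)
  then obtain m' where "m' \<in> {..<m}" "H m' * w (m - m')\<noteq> 0"
    by (rule sum.not_neutral_contains_not_neutral)
  then have "m' < m" "H m' \<noteq> 0" "w (m - m') \<noteq> 0" by auto
  with H w have "even (m' + i)" "odd (m - m')" unfolding parity_supported_def by blast+
  moreover have "(m - m') + (m' + i) + 1 = m + Suc i" using \<open>m' < m\<close> by simp
  ultimately show "even (m + Suc i)" by (metis even_add even_plus_one_iff)
qed

lemma parity_supported_funpow_avg:
  "parity_supported H i \<Longrightarrow> (\<And>d. even d \<Longrightarrow> w d = 0) \<Longrightarrow> parity_supported ((avg w ^^ k) H) (i + k)"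
  by (induction k) (auto intro: parity_supported_avg)

lemma half_sign_sq: "half_sign j m * half_sign j m = 1"
  by (simp add: half_sign_def power_mult_distrib[symmetric])

lemma half_sign_odd_ind:
  assumes "parity_supported H i" "m' < m"
  shows "half_sign i m' * H m' * odd_ind (m - m') = - half_sign (Suc i) m * (H m' * odd_sign (m - m'))"
proof (cases "odd (m - m') \<and> H m' \<noteq> 0")
  case True
  then obtain u w where u: "m' + i = 2 * u" and w: "m - m' = 2 * w + 1"
    using assms(1) by (meson evenE oddE parity_supported_def)
  then have "(m' + i) div 2 = u" "(m + Suc i) div 2 = u + w + 1" "odd_sign (m - m') = (-1)^w"
    using assms(2) by (simp_all add: odd_sign_def)
  then show ?thesis
    using True by (simp add: half_sign_def odd_ind_def power_add algebra_simps power_mult_distrib[symmetric])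
qed (auto simp: odd_ind_def)

lemma sum_half_sign_odd_ind:
  assumes "parity_supported H i"
  shows "(\<Sum>m'<m. e * half_sign i m' * H m' * odd_ind (m - m')) = - e * half_sign (Suc i) m * (\<Sum>m'<m. H m' * odd_sign (m - m'))"
proof -
  have "e * half_sign i m' * H m' * odd_ind (m - m') = - e * half_sign (Suc i) m * (H m' * odd_sign (m - m'))"
    if "m' < m" for m'
    using half_sign_odd_ind[OF assms that] by (simp add: mult.assoc)
  then show ?thesis by (simp add: sum_distrib_left)
qed

lemma odd_step_plain: "odd_step 1 False j G = avg odd_ind G"
  by (simp add: fun_eq_iff odd_step_def avg_def)

lemma odd_step_barred: "odd_step 1 True j G = (\<lambda>m. half_sign j m * avg odd_ind G m)"
  by (simp add: fun_eq_iff odd_step_def avg_def half_sign_def)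

lemma odd_step_plain_signed:
  "parity_supported H i \<Longrightarrow>
     odd_step 1 False (Suc i) (\<lambda>m. e * half_sign i m * H m) = (\<lambda>m. - e * half_sign (Suc i) m * avg odd_sign H m)"
  by (simp add: fun_eq_iff odd_step_def avg_def sum_half_sign_odd_ind)

lemma odd_step_barred_signed:
  assumes "parity_supported H i" "1 \<le> q"
  shows "odd_step q True (Suc i) (\<lambda>m. e * half_sign i m * H m) = (\<lambda>m. - e * (avg odd_sign H m / real m ^ (q - 1)))"
proof
  fix m
  have "odd_step q True (Suc i) (\<lambda>m. e * half_sign i m * H m) m
      = (\<Sum>m'<m. e * half_sign i m' * H m' * odd_ind (m - m')) * half_sign (Suc i) m / real m ^ q"
    by (simp add: odd_step_def half_sign_def mult.assoc)
  also have "\<dots> = - e * (half_sign (Suc i) m * half_sign (Suc i) m) * (\<Sum>m'<m. H m' * odd_sign (m - m')) / real m ^ q"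
    by (subst sum_half_sign_odd_ind[OF assms(1)]) (simp add: ac_simps)
  also have "\<dots> = - e * (avg odd_sign H m / real m ^ (q - 1))"
    using assms(2) by (cases q) (simp_all add: half_sign_sq avg_def)
  finally show "odd_step q True (Suc i) (\<lambda>m. e * half_sign i m * H m) m = - e * (avg odd_sign H m / real m ^ (q - 1))" .
qed

lemma odd_nest_append: "odd_nest (xs @ ys) j G = odd_nest ys (j + length xs) (odd_nest xs j G)"
proof (induction xs arbitrary: j G)
  case (Cons kb xs)
  obtain k b where "kb = (k, b)" by fastforce
  with Cons.IH show ?case by simp
qed simp

lemma odd_nest_replicate_plain: "odd_nest (replicate k (1, False)) j G = (avg odd_ind ^^ k) G"
  by (induction k arbitrary: j G) (simp_all add: odd_step_plain funpow_swap1 del: One_nat_def)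

lemma odd_nest_replicate_signed:
  "parity_supported H i \<Longrightarrow> odd_nest (replicate k (1, False)) (Suc i) (\<lambda>m. e * half_sign i m * H m)
    = (\<lambda>m. (e * (-1)^k) * half_sign (i + k) m * (avg odd_sign ^^ k) H m)"
proof (induction k arbitrary: i e H)
  case (Suc k)
  have "parity_supported (avg odd_sign H) (Suc i)" by (rule parity_supported_avg[OF Suc.prems]) simp
  from Suc.IH[OF this, of "- e"] Suc.prems show ?case
    by (simp add: odd_step_plain_signed funpow_swap1 del: One_nat_def)
qed simp

lemma odd_nest_barred_last:
  assumes "1 \<le> r"
  shows "odd_nest (replicate (r - 1) (1, False) @ [(Suc p, True)]) 1 delta
       = (\<lambda>m. (-1)^r * ((avg odd_sign ^^ r) delta m / real m ^ p))"
proof -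
  obtain r' where r: "r = Suc r'" using assms by (cases r) auto
  have "delta = (\<lambda>m. 1 * half_sign 0 m * delta m)"
    by (auto simp: delta_def half_sign_def)
  then have "odd_nest (replicate r' (1, False)) (Suc 0) delta
      = (\<lambda>m. (-1)^r' * half_sign r' m * (avg odd_sign ^^ r') delta m)"
    using odd_nest_replicate_signed[OF parity_supported_delta, of r' 1] by simp
  then have "odd_nest (replicate (r - 1) (1, False) @ [(Suc p, True)]) 1 delta
      = odd_step (Suc p) True (Suc r') (\<lambda>m. (-1)^r' * half_sign r' m * (avg odd_sign ^^ r') delta m)"
    by (simp add: r odd_nest_append)
  also have "\<dots> = (\<lambda>m. (-1)^r * ((avg odd_sign ^^ r) delta m / real m ^ p))"
    using parity_supported_funpow_avg[OF parity_supported_delta, of odd_sign r']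
    by (subst odd_step_barred_signed) (simp_all add: r)
  finally show ?thesis .
qed

lemma odd_nest_two_bars:
  assumes "1 \<le> r"
  shows "odd_nest (replicate p (1, False) @ [(1, True)] @ replicate (r - 1) (1, False) @ [(1, True)]) 1 delta
       = (\<lambda>m. (-1)^r * (avg odd_sign ^^ r) ((avg odd_ind ^^ Suc p) delta) m)"
proof -
  obtain r' where r: "r = Suc r'" using assms by (cases r) auto
  define A where "A = (avg odd_ind ^^ Suc p) delta"
  have A: "parity_supported A (Suc p)"
    using parity_supported_funpow_avg[OF parity_supported_delta, of odd_ind "Suc p"] by (simp add: A_def)
  have B: "parity_supported ((avg odd_sign ^^ r') A) (Suc p + r')"
    by (rule parity_supported_funpow_avg[OF A]) simp
  define W where "W = replicate p (1::nat, False) @ [(1, True)]"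
  have "odd_nest W 1 delta = (\<lambda>m. 1 * half_sign (Suc p) m * A m)"
    by (simp add: W_def odd_nest_append odd_nest_replicate_plain odd_step_barred A_def plus_1_eq_Suc del: One_nat_def)
  then have "odd_nest (W @ replicate r' (1, False)) 1 delta
      = odd_nest (replicate r' (1, False)) (Suc (Suc p)) (\<lambda>m. 1 * half_sign (Suc p) m * A m)"
    by (simp add: odd_nest_append W_def)
  also have "\<dots> = (\<lambda>m. (1 * (-1)^r') * half_sign (Suc p + r') m * (avg odd_sign ^^ r') A m)"
    by (rule odd_nest_replicate_signed[OF A])
  finally have "odd_nest ((W @ replicate r' (1, False)) @ [(1, True)]) 1 delta
      = odd_step 1 True (Suc (Suc p + r')) (\<lambda>m. (1 * (-1)^r') * half_sign (Suc p + r') m * (avg odd_sign ^^ r') A m)"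
    using odd_nest_append[of "W @ replicate r' (1, False)" "[(1, True)]" 1 delta] by (simp add: W_def)
  also have "\<dots> = (\<lambda>m. (-1)^r * (avg odd_sign ^^ r) A m)"
    by (subst odd_step_barred_signed[OF B]) (simp_all add: r)
  finally show ?thesis by (simp add: r W_def A_def)
qed

lemma odd_nest_left_word:
  assumes "1 \<le> r"
  shows "odd_nest ((if p = 0 then [] else replicate (p - 1) (1, False) @ [(1, True)])
                   @ replicate (r - 1) (1, False) @ [(1, True)]) 1 delta
       = (\<lambda>m. (-1)^r * (avg odd_sign ^^ r) ((avg odd_ind ^^ p) delta) m)"
proof (cases p)
  case 0
  then show ?thesis using odd_nest_barred_last[OF assms, of 0] by simp
next
  case (Suc p')
  then show ?thesis using odd_nest_two_bars[OF assms, of p'] by simp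
qed

theorem mainTheorem13:
  fixes p r :: nat
  assumes "r \<ge> 1"
  shows "\<exists>L. Tsum ((if p = 0 then [] else replicate (p - 1) (1, False) @ [(1, True)])
                    @ replicate (r - 1) (1, False) @ [(1, True)]) \<longlonglongrightarrow> L
           \<and> Tsum (replicate (r - 1) (1, False) @ [(p + 1, True)]) \<longlonglongrightarrow> L"
proof -
  define left_word :: "(nat \<times> bool) list" where "left_word =
    (if p = 0 then [] else replicate (p - 1) (1, False) @ [(1, True)]) @ replicate (r - 1) (1, False) @ [(1, True)]"
  define right_word :: "(nat \<times> bool) list" where "right_word = replicate (r - 1) (1, False) @ [(p + 1, True)]"
  obtain X where left: "(avg odd_sign ^^ r) ((avg odd_ind ^^ p) delta) sums X"
    and right: "(\<lambda>m. (avg odd_sign ^^ r) delta m / (2 * real m) ^ p) sums X"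
    using funpow_avg_odd_sign_delta_sums_eq[OF assms] by blast
  have "odd_nest left_word 1 delta sums ((-1)^r * X)"
    unfolding left_word_def odd_nest_left_word[OF assms] by (rule sums_mult[OF left])
  then have left_limit: "Tsum left_word \<longlonglongrightarrow> 2 ^ length left_word * ((-1)^r * X)" by (rule Tsum_tendsto)
  have "(\<lambda>m. (avg odd_sign ^^ r) delta m / real m ^ p) = (\<lambda>m. 2^p * ((avg odd_sign ^^ r) delta m / (2 * real m) ^ p))"
    by (simp add: fun_eq_iff power_mult_distrib)
  then have "odd_nest right_word 1 delta sums ((-1)^r * 2^p * X)"
    unfolding right_word_def using odd_nest_barred_last[OF assms, of p] sums_mult[OF sums_mult[OF right, of "2^p"], of "(-1)^r"]
    by (simp add: mult.assoc)
  then have right_limit: "Tsum right_word \<longlonglongrightarrow> 2 ^ length right_word * ((-1)^r * 2^p * X)" by (rule Tsum_tendsto)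
  have "length left_word = p + r" "length right_word = r"
    using assms by (simp_all add: left_word_def right_word_def)
  then have "2 ^ length left_word * ((-1)^r * X) = 2 ^ length right_word * ((-1)^r * 2^p * (X::real))"
    by (simp add: power_add)
  with right_limit have "Tsum right_word \<longlonglongrightarrow> 2 ^ length left_word * ((-1)^r * X)" by (simp only:)
  with left_limit show ?thesis unfolding left_word_def right_word_def by blast
qed

end
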